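(* Let $S$ be a poset, $(G_i)_{i\in S}$ a family of impartial games, and $G = S \otimes_i G_i$ their ordered join. Let $T \subseteq S$ be the support of $G$. (1) $G$ is terminating if and only if $T$ is a well partially ordered set and each component $G_i$ ($i\in S$) is terminating. (2) $G$ is short if and only if $T$ is finite and each component $G_i$ ($i \in S$) is short.
   Context: All games are impartial combinatorial games under normal play; a game is determined by its set of options, and $G \to G'$ means $G'$ is an option of $G$. A game is terminating if it admits no infinite sequence of moves, and short if it is terminating and has only finitely many positions (reachable subgames). $\mathbf{0}$ denotes the game with no options. Ordered join: for a poset $S$ and a family $(G_i)_{i\in S}$ of games, $S \otimes_i G_i$ is the game whose options are exactly the ordered joins $S \otimes_i G'_i$ obtained by choosing one $i_0\in S$ and an option $G_{i_0}\to G'_{i_0}$, and setting $G'_i=\mathbf{0}$ for all $i>i_0$ and $G'_i=G_i$ for all other $i\ne i_0$. The support of $S\otimes_i G_i$ is the induced subposet of $S$ consisting of all $i$ with $G_i\neq\mathbf{0}$. A poset is a well partially ordered set (wposet) if every infinite sequence in it contains an infinite ascending subsequence (equivalently, it has no infinite strictly descending chain and no infinite antichain). *)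

theory Defs
  imports Main
begin

text \<open>Impartial games are represented as positions (nodes) in a move graph:
  a type of positions together with a move relation mv, where mv x y means
  that y is an option of x. The game at a node is determined by its options
  (equality of games is bisimilarity of nodes).\<close>

definition terminating :: "('g \<Rightarrow> 'g \<Rightarrow> bool) \<Rightarrow> 'g \<Rightarrow> bool" where
  "terminating mv x \<longleftrightarrow> \<not> (\<exists>f. f 0 = x \<and> (\<forall>n. mv (f n) (f (Suc n))))"

definition game_bisim :: "('g \<Rightarrow> 'g \<Rightarrow> bool) \<Rightarrow> 'g \<Rightarrow> 'g \<Rightarrow> bool" where
  "game_bisim mv x y \<longleftrightarrow> (\<exists>R. R x y \<and>
     (\<forall>a b. R a b \<longrightarrow>
        (\<forall>a'. mv a a' \<longrightarrow> (\<exists>b'. mv b b' \<and> R a' b')) \<and>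
        (\<forall>b'. mv b b' \<longrightarrow> (\<exists>a'. mv a a' \<and> R a' b'))))"

text \<open>Positions (reachable subgames) counted as games, i.e. up to bisimilarity.\<close>
definition short :: "('g \<Rightarrow> 'g \<Rightarrow> bool) \<Rightarrow> 'g \<Rightarrow> bool" where
  "short mv x \<longleftrightarrow> terminating mv x \<and>
     finite ((\<lambda>y. {z. game_bisim mv y z}) ` {y. mv\<^sup>*\<^sup>* x y})"

text \<open>Moves of a component; None stands for the zero game.\<close>
definition opt_mv :: "('g \<Rightarrow> 'g \<Rightarrow> bool) \<Rightarrow> 'g option \<Rightarrow> 'g option \<Rightarrow> bool" where
  "opt_mv mv a b \<longleftrightarrow> (case a of None \<Rightarrow> False
      | Some x \<Rightarrow> (case b of None \<Rightarrow> False | Some y \<Rightarrow> mv x y))"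

definition join_mv :: "('g \<Rightarrow> 'g \<Rightarrow> bool) \<Rightarrow> ('i::order \<Rightarrow> 'g option) \<Rightarrow> ('i \<Rightarrow> 'g option) \<Rightarrow> bool" where
  "join_mv mv F F' \<longleftrightarrow> (\<exists>i0. opt_mv mv (F i0) (F' i0) \<and>
      (\<forall>i. i0 < i \<longrightarrow> F' i = None) \<and>
      (\<forall>i. i \<noteq> i0 \<and> \<not> i0 < i \<longrightarrow> F' i = F i))"

definition ordered_join :: "('i::order \<Rightarrow> 'g) \<Rightarrow> ('i \<Rightarrow> 'g option)" where
  "ordered_join G = (\<lambda>i. Some (G i))"

definition support :: "('g \<Rightarrow> 'g \<Rightarrow> bool) \<Rightarrow> ('i \<Rightarrow> 'g) \<Rightarrow> 'i set" where
  "support mv G = {i. \<exists>y. mv (G i) y}"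

definition wpo_on :: "('i::order) set \<Rightarrow> bool" where
  "wpo_on T \<longleftrightarrow> (\<forall>f::nat \<Rightarrow> _. (\<forall>n. f n \<in> T) \<longrightarrow>
      (\<exists>h::nat \<Rightarrow> nat. strict_mono h \<and> (\<forall>m n. m \<le> n \<longrightarrow> f (h m) \<le> f (h n))))"

end

theory Submission
  imports Defs "HOL-Library.Infinite_Set" "HOL-Library.Ramsey"
begin

text \<open>
  A move of the ordered join at index i zeroes every component above i, and a zero component
  stays zero. So along an infinite play no moved index is followed by a strictly larger one; if
  the support is a well partial order, some index is therefore moved infinitely often, and the
  values of that component form an infinite play of it. Conversely a non-terminating component
  can be played on its own, and a bad sequence in the support (which exists by Ramsey's theorem
  unless the support is a well partial order) can be played once at each of its indices.

  A game is short iff its plays have bounded length: positions of depth at most N fall into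
  finitely many bisimulation classes, since a class is determined by the classes of the
  options; and a play longer than the number of classes would make a terminating position
  bisimilar to a proper descendant. A join of bounded depth has finite support, as an infinite
  well partial order contains an infinite ascending chain, whose first N+1 elements can be
  moved from the top down. Conversely, over a finite support the sum of the depths of the
  components strictly decreases along every move.
\<close>

lemma rtranclp_chain:
  assumes "n \<le> m" and "\<And>k. n \<le> k \<Longrightarrow> k < m \<Longrightarrow> R\<^sup>*\<^sup>* (f k) (f (Suc k))"
  shows "R\<^sup>*\<^sup>* (f n) (f m)"
  using assms by (induction m rule: dec_induct) (auto intro: rtranclp_trans)

lemma terminating_iff_termip: "terminating mv x \<longleftrightarrow> termip mv x"
proof
  assume "termip mv x"
  then have "\<nexists>f. f 0 = x \<and> (\<forall>n. mv (f n) (f (Suc n)))"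
  proof (induction rule: accp_induct_rule)
    case (1 x)
    show ?case
    proof
      assume "\<exists>f. f 0 = x \<and> (\<forall>n. mv (f n) (f (Suc n)))"
      then obtain f where f: "f 0 = x" "\<forall>n. mv (f n) (f (Suc n))" by blast
      then have "\<nexists>g. g 0 = f (Suc 0) \<and> (\<forall>n. mv (g n) (g (Suc n)))"
        using "1.IH" by (metis conversep_iff)
      then show False
        by (rule notE) (intro exI[of _ "\<lambda>n. f (Suc n)"], use f(2) in simp)
    qed
  qed
  then show "terminating mv x" unfolding terminating_def .
next
  assume "terminating mv x"
  show "termip mv x"
  proof (rule ccontr)
    assume "\<not> termip mv x"
    have "\<exists>y. mv z y \<and> \<not> termip mv y" if "\<not> termip mv z" for z
      using not_accp_down[OF that] by (metis conversep_iff)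
    then have "\<exists>f. \<forall>n. (\<not> termip mv (f n) \<and> (n = 0 \<longrightarrow> f n = x)) \<and> mv (f n) (f (Suc n))"
      by (intro dependent_nat_choice) (use \<open>\<not> termip mv x\<close> in blast)+
    with \<open>terminating mv x\<close> show False unfolding terminating_def by blast
  qed
qed

lemma terminating_rtranclp: "terminating mv x \<Longrightarrow> mv\<^sup>*\<^sup>* x y \<Longrightarrow> terminating mv y"
  unfolding terminating_iff_termip by (auto elim: accp_downwards simp: rtranclp_conversep)

lemma not_terminating_if_recurrent:
  assumes "terminating mv x" and "P x" and "\<And>w. P w \<Longrightarrow> \<exists>w'. mv\<^sup>+\<^sup>+ w w' \<and> P w'"
  shows False
proof -
  have "\<not> P w" if "termip mv z" "mv\<^sup>*\<^sup>* z w" for z w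
    using that
  proof (induction arbitrary: w rule: accp_induct_rule)
    case (1 z)
    show ?case
    proof
      assume "P w"
      then obtain w' where "mv\<^sup>+\<^sup>+ w w'" "P w'" using assms(3) by blast
      then have "mv\<^sup>+\<^sup>+ z w'" using "1.prems" rtranclp_tranclp_tranclp by metis
      then obtain y where "mv z y" "mv\<^sup>*\<^sup>* y w'" by (blast dest: tranclpD)
      with "1.IH" \<open>P w'\<close> show False by auto
    qed
  qed
  with assms(1,2) show False by (auto simp: terminating_iff_termip)
qed

lemma not_terminating_if_infinitely_many_moves:
  assumes "\<And>n. f (Suc n) = f n \<or> mv (f n) (f (Suc n))" and "\<exists>\<^sub>\<infinity>n. mv (f n) (f (Suc n))"
  shows "\<not> terminating mv (f 0)"
proof
  assume "terminating mv (f 0)"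
  then show False
  proof (rule not_terminating_if_recurrent[where P = "\<lambda>w. w \<in> range f"])
    fix w assume "w \<in> range f"
    then obtain n where "w = f n" by blast
    obtain m where "n \<le> m" "mv (f m) (f (Suc m))" using assms(2) by (auto simp: INFM_nat_le)
    moreover have "mv\<^sup>*\<^sup>* (f n) (f m)"
      using \<open>n \<le> m\<close> by (rule rtranclp_chain) (metis assms(1) r_into_rtranclp rtranclp.rtrancl_refl)
    ultimately show "\<exists>w'. mv\<^sup>+\<^sup>+ w w' \<and> w' \<in> range f"
      using \<open>w = f n\<close> by (blast intro: rtranclp_into_tranclp1)
  qed simp
qed

definition bisimulation :: "('g \<Rightarrow> 'g \<Rightarrow> bool) \<Rightarrow> ('g \<Rightarrow> 'g \<Rightarrow> bool) \<Rightarrow> bool" where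
  "bisimulation mv R \<longleftrightarrow> (\<forall>a b. R a b \<longrightarrow>
     (\<forall>a'. mv a a' \<longrightarrow> (\<exists>b'. mv b b' \<and> R a' b')) \<and>
     (\<forall>b'. mv b b' \<longrightarrow> (\<exists>a'. mv a a' \<and> R a' b')))"

lemma game_bisim_iff_bisimulation: "game_bisim mv x y \<longleftrightarrow> (\<exists>R. R x y \<and> bisimulation mv R)"
  unfolding game_bisim_def bisimulation_def ..

lemma bisimulation_game_bisim: "bisimulation mv (game_bisim mv)"
  unfolding bisimulation_def
proof (intro allI impI)
  fix a b assume "game_bisim mv a b"
  then obtain R where "R a b" and R: "bisimulation mv R"
    unfolding game_bisim_iff_bisimulation by blast
  have "game_bisim mv a' b'" if "R a' b'" for a' b'
    using that R unfolding game_bisim_iff_bisimulation by blast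
  with \<open>R a b\<close> R show "(\<forall>a'. mv a a' \<longrightarrow> (\<exists>b'. mv b b' \<and> game_bisim mv a' b')) \<and>
      (\<forall>b'. mv b b' \<longrightarrow> (\<exists>a'. mv a a' \<and> game_bisim mv a' b'))"
    unfolding bisimulation_def by blast
qed

lemma game_bisim_refl: "game_bisim mv x x"
  unfolding game_bisim_iff_bisimulation
  by (rule exI[of _ "(=)"]) (auto simp: bisimulation_def)

lemma bisimulation_conversep: "bisimulation mv R \<Longrightarrow> bisimulation mv R\<inverse>\<inverse>"
  unfolding bisimulation_def by (simp only: conversep_iff) blast

lemma bisimulation_relcompp: "bisimulation mv R \<Longrightarrow> bisimulation mv S \<Longrightarrow> bisimulation mv (R OO S)"
  unfolding bisimulation_def relcompp_apply by metis

lemma game_bisim_sym: "game_bisim mv x y \<Longrightarrow> game_bisim mv y x"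
  unfolding game_bisim_iff_bisimulation by (metis bisimulation_conversep conversepI)

lemma game_bisim_trans: "game_bisim mv x y \<Longrightarrow> game_bisim mv y z \<Longrightarrow> game_bisim mv x z"
  unfolding game_bisim_iff_bisimulation by (metis bisimulation_relcompp relcompp.relcompI)

lemma bisimulation_option:
  "bisimulation mv R \<Longrightarrow> R x y \<Longrightarrow> mv x x' \<Longrightarrow> \<exists>y'. mv y y' \<and> R x' y'"
  unfolding bisimulation_def by blast

lemmas game_bisim_option = bisimulation_option[OF bisimulation_game_bisim]

lemma game_bisim_tranclp:
  assumes "mv\<^sup>+\<^sup>+ x x'" and "game_bisim mv x y"
  shows "\<exists>y'. mv\<^sup>+\<^sup>+ y y' \<and> game_bisim mv x' y'"
  using assms
proof (induction arbitrary: y rule: tranclp_induct)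
  case (base x')
  then show ?case by (metis game_bisim_option tranclp.r_into_trancl)
next
  case (step x' x'')
  then obtain y' where "mv\<^sup>+\<^sup>+ y y'" "game_bisim mv x' y'" by meson
  then show ?case by (metis game_bisim_option step.hyps(2) tranclp.trancl_into_trancl)
qed

lemma not_game_bisim_descendant:
  assumes "terminating mv p" and "mv\<^sup>+\<^sup>+ p q"
  shows "\<not> game_bisim mv p q"
proof
  assume "game_bisim mv p q"
  show False
  proof (rule not_terminating_if_recurrent[where P = "\<lambda>w. game_bisim mv p w"])
    fix w assume "game_bisim mv p w"
    then obtain w' where "mv\<^sup>+\<^sup>+ w w'" "game_bisim mv q w'"
      using game_bisim_tranclp[OF assms(2)] by metis
    moreover have "game_bisim mv p w'"
      using \<open>game_bisim mv p q\<close> \<open>game_bisim mv q w'\<close> by (rule game_bisim_trans)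
    ultimately show "\<exists>w'. mv\<^sup>+\<^sup>+ w w' \<and> game_bisim mv p w'" by metis
  qed (use assms(1) game_bisim_refl in auto)
qed

definition game_class :: "('g \<Rightarrow> 'g \<Rightarrow> bool) \<Rightarrow> 'g \<Rightarrow> 'g set" where
  "game_class mv x = {y. game_bisim mv x y}"

lemma game_class_eq_iff: "game_class mv x = game_class mv y \<longleftrightarrow> game_bisim mv x y"
proof
  assume "game_class mv x = game_class mv y"
  moreover have "y \<in> game_class mv y"
    unfolding game_class_def by (simp add: game_bisim_refl)
  ultimately have "y \<in> game_class mv x" by simp
  then show "game_bisim mv x y"
    unfolding game_class_def by simp
next
  assume xy: "game_bisim mv x y"
  have "game_bisim mv x = game_bisim mv y"
  proof
    show "game_bisim mv x z \<longleftrightarrow> game_bisim mv y z" for z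
      by (metis xy game_bisim_sym game_bisim_trans)
  qed
  then show "game_class mv x = game_class mv y"
    unfolding game_class_def by simp
qed

abbreviation option_classes :: "('g \<Rightarrow> 'g \<Rightarrow> bool) \<Rightarrow> 'g \<Rightarrow> 'g set set" where
  "option_classes mv x \<equiv> game_class mv ` {x'. mv x x'}"

lemma game_bisim_imp_option_classes_eq:
  assumes "game_bisim mv x y"
  shows "option_classes mv x = option_classes mv y"
proof -
  have "option_classes mv a \<subseteq> option_classes mv b" if ab: "game_bisim mv a b" for a b
  proof
    fix c assume "c \<in> option_classes mv a"
    then obtain a' where "mv a a'" "c = game_class mv a'" by blast
    then obtain b' where "mv b b'" "game_bisim mv a' b'"
      using game_bisim_option[OF ab] by metis
    then show "c \<in> option_classes mv b"
      using \<open>c = game_class mv a'\<close> by (auto simp: game_class_eq_iff)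
  qed
  from this[OF assms] this[OF game_bisim_sym[OF assms]] show ?thesis
    by (rule equalityI)
qed

lemma game_bisim_iff_option_classes_eq:
  "game_bisim mv x y \<longleftrightarrow> option_classes mv x = option_classes mv y"
proof
  assume eq: "option_classes mv x = option_classes mv y"
  have bisim: "bisimulation mv (\<lambda>a b. option_classes mv a = option_classes mv b)"
    unfolding bisimulation_def
  proof (intro allI impI conjI)
    fix a b a' assume "option_classes mv a = option_classes mv b" "mv a a'"
    then have "game_class mv a' \<in> option_classes mv b" by auto
    then obtain b' where "mv b b'" "game_bisim mv a' b'" by (auto simp: game_class_eq_iff)
    then show "\<exists>b'. mv b b' \<and> option_classes mv a' = option_classes mv b'"
      by (meson game_bisim_imp_option_classes_eq)
  next
    fix a b b' assume "option_classes mv a = option_classes mv b" "mv b b'"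
    then have "game_class mv b' \<in> option_classes mv a" by auto
    then obtain a' where "mv a a'" "game_class mv b' = game_class mv a'" by auto
    then have "game_bisim mv a' b'" by (metis game_class_eq_iff game_bisim_sym)
    with \<open>mv a a'\<close> show "\<exists>a'. mv a a' \<and> option_classes mv a' = option_classes mv b'"
      by (meson game_bisim_imp_option_classes_eq)
  qed
  show "game_bisim mv x y"
    unfolding game_bisim_iff_bisimulation
    by (rule exI[of _ "\<lambda>a b. option_classes mv a = option_classes mv b"]) (simp add: eq bisim)
qed (rule game_bisim_imp_option_classes_eq)

lemma game_class_eq_option_classes:
  "game_class mv x = {y. option_classes mv x = option_classes mv y}"
  unfolding game_class_def[of mv x] game_bisim_iff_option_classes_eq[of mv x] ..

lemma finite_game_classes:
  assumes "finite (option_classes mv ` A)"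
  shows "finite (game_class mv ` A)"
proof -
  have "game_class mv ` A = (\<lambda>C. {y. C = option_classes mv y}) ` option_classes mv ` A"
    unfolding image_image by (intro image_cong refl game_class_eq_option_classes)
  with assms show ?thesis by (metis finite_imageI)
qed

definition depth_le :: "('g \<Rightarrow> 'g \<Rightarrow> bool) \<Rightarrow> nat \<Rightarrow> 'g \<Rightarrow> bool" where
  "depth_le mv N x \<longleftrightarrow> (\<forall>n y. (mv ^^ n) x y \<longrightarrow> n \<le> N)"

lemma depth_le_iff_option_depth:
  "depth_le mv N x \<longleftrightarrow> (\<forall>y. mv x y \<longrightarrow> 0 < N \<and> depth_le mv (N - 1) y)"
proof (intro iffI allI impI conjI)
  fix y assume x: "depth_le mv N x" and "mv x y"
  have le: "Suc n \<le> N" if "(mv ^^ n) y z" for n z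
    using x relpowp_Suc_I2[OF \<open>mv x y\<close> that] unfolding depth_le_def by blast
  from le[OF relpowp_0_I] show "0 < N" by simp
  show "depth_le mv (N - 1) y"
    unfolding depth_le_def using le by fastforce
next
  assume options: "\<forall>y. mv x y \<longrightarrow> 0 < N \<and> depth_le mv (N - 1) y"
  show "depth_le mv N x"
    unfolding depth_le_def
  proof (intro allI impI)
    fix n z assume "(mv ^^ n) x z"
    then show "n \<le> N"
    proof (cases n)
      case (Suc m)
      from \<open>(mv ^^ n) x z\<close>[unfolded Suc] obtain y where "mv x y" "(mv ^^ m) y z"
        by (rule relpowp_Suc_E2)
      with options show ?thesis
        unfolding depth_le_def Suc by fastforce
    qed simp
  qed
qed

lemma depth_le_rtranclp:
  assumes "depth_le mv N x" and "mv\<^sup>*\<^sup>* x y"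
  shows "depth_le mv N y"
  unfolding depth_le_def
proof (intro allI impI)
  obtain k where k: "(mv ^^ k) x y" using rtranclp_imp_relpowp[OF assms(2)] by blast
  fix n z assume "(mv ^^ n) y z"
  with k have "(mv ^^ (k + n)) x z" unfolding relpowp_add by (rule relcomppI)
  with assms(1) have "k + n \<le> N" unfolding depth_le_def by blast
  then show "n \<le> N" by simp
qed

lemma depth_le_imp_terminating:
  assumes "depth_le mv N x"
  shows "terminating mv x"
  unfolding terminating_def
proof
  assume "\<exists>f. f 0 = x \<and> (\<forall>n. mv (f n) (f (Suc n)))"
  then obtain f where "f 0 = x" "\<forall>n. mv (f n) (f (Suc n))" by blast
  then have "(mv ^^ Suc N) x (f (Suc N))"
    unfolding relpowp_fun_conv by blast
  with assms show False
    unfolding depth_le_def by (meson Suc_n_not_le_n)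
qed

lemma depth_le_if_ranking:
  fixes \<phi> :: "'g \<Rightarrow> nat"
  assumes "\<And>y z. mv\<^sup>*\<^sup>* x y \<Longrightarrow> mv y z \<Longrightarrow> \<phi> z < \<phi> y"
  shows "depth_le mv (\<phi> x) x"
proof -
  have "\<phi> y + n \<le> \<phi> x" if "(mv ^^ n) x y" for n y
    using that
  proof (induction n arbitrary: y)
    case (Suc n)
    then obtain z where "(mv ^^ n) x z" "mv z y" by auto
    with Suc.IH assms[of z y] show ?case by (fastforce dest: relpowp_imp_rtranclp)
  qed simp
  then show ?thesis unfolding depth_le_def by fastforce
qed

definition depth :: "('g \<Rightarrow> 'g \<Rightarrow> bool) \<Rightarrow> 'g \<Rightarrow> nat" where
  "depth mv x = (LEAST N. depth_le mv N x)"

lemma depth_less: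
  assumes "depth_le mv N x" and "mv x y"
  shows "depth mv y < depth mv x"
proof -
  have x: "depth_le mv (depth mv x) x"
    unfolding depth_def using assms(1) by (rule LeastI)
  with assms(2) have "0 < depth mv x" "depth_le mv (depth mv x - 1) y"
    using depth_le_iff_option_depth[of mv "depth mv x" x] by blast+
  then have "depth mv y \<le> depth mv x - 1"
    unfolding depth_def[of mv y] by (intro Least_le)
  with \<open>0 < depth mv x\<close> show ?thesis by simp
qed

lemma finite_game_classes_depth_le: "finite (game_class mv ` {x. depth_le mv N x})"
proof (induction N)
  case 0
  have "\<not> mv x y" if "depth_le mv 0 x" for x y
    using that depth_le_iff_option_depth[of mv 0 x] by blast
  then have "option_classes mv ` {x. depth_le mv 0 x} \<subseteq> {{}}" by auto
  then show ?case
    by (intro finite_game_classes) (auto intro: finite_subset)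
next
  case (Suc N)
  have "depth_le mv N y" if "depth_le mv (Suc N) x" "mv x y" for x y
    using that depth_le_iff_option_depth[of mv "Suc N" x] by simp
  then have "option_classes mv ` {x. depth_le mv (Suc N) x}
      \<subseteq> Pow (game_class mv ` {x. depth_le mv N x})"
    by auto
  with Suc.IH show ?case
    by (intro finite_game_classes) (auto intro: finite_subset)
qed

lemma short_iff_finite_game_classes:
  "short mv x \<longleftrightarrow> terminating mv x \<and> finite (game_class mv ` {y. mv\<^sup>*\<^sup>* x y})"
  unfolding short_def game_class_def[abs_def] ..

text \<open>Two positions of a play in the same class would make a terminating position bisimilar to a
  proper descendant.\<close>

lemma relpowp_length_less_card_game_classes:
  assumes "terminating mv x" and "finite (game_class mv ` {y. mv\<^sup>*\<^sup>* x y})"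
    and "(mv ^^ n) x z"
  shows "n < card (game_class mv ` {y. mv\<^sup>*\<^sup>* x y})"
proof -
  obtain f where f: "f 0 = x" "\<forall>i<n. mv (f i) (f (Suc i))"
    using assms(3) unfolding relpowp_fun_conv by blast
  have chain: "mv\<^sup>*\<^sup>* (f a) (f b)" if "a \<le> b" "b \<le> n" for a b
    using that(1) by (rule rtranclp_chain) (use f(2) that(2) in auto)
  have "game_class mv (f a) \<noteq> game_class mv (f b)" if "a < b" "b \<le> n" for a b
  proof
    assume "game_class mv (f a) = game_class mv (f b)"
    then have "game_bisim mv (f a) (f b)" by (simp add: game_class_eq_iff)
    moreover have "mv\<^sup>+\<^sup>+ (f a) (f b)"
      using rtranclp_into_tranclp2[OF _ chain[of "Suc a" b]] f(2) that by simp
    moreover have "terminating mv (f a)"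
      using terminating_rtranclp[OF assms(1)] chain[of 0 a] f(1) that by simp
    ultimately show False by (metis not_game_bisim_descendant)
  qed
  then have "inj_on (\<lambda>j. game_class mv (f j)) {0..n}"
    unfolding inj_on_def by (metis atLeastAtMost_iff linorder_neq_iff)
  moreover have "(\<lambda>j. game_class mv (f j)) ` {0..n} \<subseteq> game_class mv ` {y. mv\<^sup>*\<^sup>* x y}"
    using chain[of 0] f(1) by auto
  ultimately have "card {0..n} \<le> card (game_class mv ` {y. mv\<^sup>*\<^sup>* x y})"
    using assms(2) by (rule card_inj_on_le)
  then show ?thesis by simp
qed

lemma short_iff_depth_le: "short mv x \<longleftrightarrow> (\<exists>N. depth_le mv N x)"
proof
  assume "\<exists>N. depth_le mv N x"
  then obtain N where N: "depth_le mv N x" ..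
  have "game_class mv ` {y. mv\<^sup>*\<^sup>* x y} \<subseteq> game_class mv ` {y. depth_le mv N y}"
    using depth_le_rtranclp[OF N] by auto
  then have "finite (game_class mv ` {y. mv\<^sup>*\<^sup>* x y})"
    using finite_game_classes_depth_le by (rule finite_subset)
  with depth_le_imp_terminating[OF N] show "short mv x"
    unfolding short_iff_finite_game_classes ..
next
  assume "short mv x"
  then have "depth_le mv (card (game_class mv ` {y. mv\<^sup>*\<^sup>* x y})) x"
    unfolding short_iff_finite_game_classes depth_le_def
    by (metis relpowp_length_less_card_game_classes less_imp_le)
  then show "\<exists>N. depth_le mv N x" ..
qed

lemma opt_mv_iff: "opt_mv mv a b \<longleftrightarrow> (\<exists>x y. a = Some x \<and> b = Some y \<and> mv x y)"
  unfolding opt_mv_def by (auto split: option.split)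

definition join_move_at ::
    "('g \<Rightarrow> 'g \<Rightarrow> bool) \<Rightarrow> 'i::order \<Rightarrow> ('i \<Rightarrow> 'g option) \<Rightarrow> ('i \<Rightarrow> 'g option) \<Rightarrow> bool" where
  "join_move_at mv i0 F F' \<longleftrightarrow> opt_mv mv (F i0) (F' i0) \<and>
      (\<forall>i. i0 < i \<longrightarrow> F' i = None) \<and> (\<forall>i. i \<noteq> i0 \<and> \<not> i0 < i \<longrightarrow> F' i = F i)"

lemma join_mv_iff_move_at: "join_mv mv F F' \<longleftrightarrow> (\<exists>i0. join_move_at mv i0 F F')"
  unfolding join_mv_def join_move_at_def ..

lemma join_move_at_component:
  assumes "join_move_at mv i0 F F'"
  shows "F' j = F j \<or> F' j = None \<or> opt_mv mv (F j) (F' j)"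
  using assms unfolding join_move_at_def by (cases "j = i0"; cases "i0 < j") auto

lemma join_mv_component:
  "join_mv mv F F' \<Longrightarrow> F' j = F j \<or> F' j = None \<or> opt_mv mv (F j) (F' j)"
  unfolding join_mv_iff_move_at using join_move_at_component by metis

lemma join_mv_None: "join_mv mv F F' \<Longrightarrow> F j = None \<Longrightarrow> F' j = None"
  using join_mv_component[of mv F F' j] by (auto simp: opt_mv_def)

lemma join_reachable_component:
  assumes "(join_mv mv)\<^sup>*\<^sup>* (ordered_join G) F" and "F j = Some x"
  shows "mv\<^sup>*\<^sup>* (G j) x"
  using assms
proof (induction arbitrary: x rule: rtranclp_induct)
  case base
  then show ?case by (simp add: ordered_join_def)
next
  case (step F F')
  from join_mv_component[OF step.hyps(2), of j] step.prems step.IH show ?case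
    by (auto simp: opt_mv_iff intro: rtranclp.rtrancl_into_rtrancl)
qed

lemma join_reachable_move_at_support:
  assumes "(join_mv mv)\<^sup>*\<^sup>* (ordered_join G) F" and "join_move_at mv i F F'"
  shows "i \<in> support mv G"
proof -
  obtain x y where "F i = Some x" "mv x y"
    using assms(2) unfolding join_move_at_def opt_mv_iff by blast
  with join_reachable_component[OF assms(1)] have "mv\<^sup>*\<^sup>* (G i) x" "mv x y" by auto
  then show ?thesis
    unfolding support_def by (auto elim: converse_rtranclpE)
qed

definition lift_play :: "('i::order \<Rightarrow> 'g) \<Rightarrow> 'i \<Rightarrow> (nat \<Rightarrow> 'g) \<Rightarrow> nat \<Rightarrow> 'i \<Rightarrow> 'g option" where
  "lift_play G i f n k =
     (if k = i then Some (f n) else if 0 < n \<and> i < k then None else Some (G k))"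

lemma lift_play_0: "f 0 = G i \<Longrightarrow> lift_play G i f 0 = ordered_join G"
  unfolding lift_play_def ordered_join_def by auto

lemma join_mv_lift_play:
  "mv (f n) (f (Suc n)) \<Longrightarrow> join_mv mv (lift_play G i f n) (lift_play G i f (Suc n))"
  unfolding join_mv_def by (intro exI[of _ i]) (auto simp: lift_play_def opt_mv_def)

lemma terminating_join_imp_component:
  assumes "terminating (join_mv mv) (ordered_join G)"
  shows "terminating mv (G i)"
  unfolding terminating_def
proof
  assume "\<exists>f. f 0 = G i \<and> (\<forall>n. mv (f n) (f (Suc n)))"
  then obtain f where "f 0 = G i" "\<forall>n. mv (f n) (f (Suc n))" by blast
  with assms show False
    unfolding terminating_def by (metis lift_play_0 join_mv_lift_play)
qed

lemma depth_le_join_imp_component: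
  assumes "depth_le (join_mv mv) N (ordered_join G)"
  shows "depth_le mv N (G i)"
  unfolding depth_le_def
proof (intro allI impI)
  fix n z assume "(mv ^^ n) (G i) z"
  then obtain f where "f 0 = G i" "\<forall>j<n. mv (f j) (f (Suc j))"
    unfolding relpowp_fun_conv by blast
  then have "(join_mv mv ^^ n) (ordered_join G) (lift_play G i f n)"
    unfolding relpowp_fun_conv by (metis lift_play_0 join_mv_lift_play)
  with assms show "n \<le> N" unfolding depth_le_def by blast
qed

definition play_along ::
    "('i::order \<Rightarrow> 'g) \<Rightarrow> ('i \<Rightarrow> 'g) \<Rightarrow> (nat \<Rightarrow> 'i) \<Rightarrow> nat \<Rightarrow> 'i \<Rightarrow> 'g option" where
  "play_along G y g n k =
     (if \<exists>m<n. g m < k then None else if \<exists>m<n. g m = k then Some (y k) else Some (G k))"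

lemma play_along_0: "play_along G y g 0 = ordered_join G"
  unfolding play_along_def ordered_join_def by simp

lemma join_mv_play_along:
  assumes "mv (G (g n)) (y (g n))" and bad: "\<And>m. m < n \<Longrightarrow> \<not> g m \<le> g n"
  shows "join_mv mv (play_along G y g n) (play_along G y g (Suc n))"
  unfolding join_mv_def
proof (intro exI[of _ "g n"] conjI allI impI)
  have "\<not> g m < g n" "g m \<noteq> g n" if "m < n" for m
    using bad[OF that] by (auto simp: order.strict_implies_order)
  then have "\<not> (\<exists>m<n. g m < g n)" "\<not> (\<exists>m<n. g m = g n)" by auto
  then have "play_along G y g n (g n) = Some (G (g n))"
    and "play_along G y g (Suc n) (g n) = Some (y (g n))"
    unfolding play_along_def Ex_less_Suc by auto
  with assms(1) show "opt_mv mv (play_along G y g n (g n)) (play_along G y g (Suc n) (g n))"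
    by (simp add: opt_mv_def)
next
  fix k assume "g n < k"
  then show "play_along G y g (Suc n) k = None"
    unfolding play_along_def Ex_less_Suc by simp
next
  fix k assume "k \<noteq> g n \<and> \<not> g n < k"
  then show "play_along G y g (Suc n) k = play_along G y g n k"
    unfolding play_along_def Ex_less_Suc by auto
qed

lemma support_option: "i \<in> support mv G \<Longrightarrow> mv (G i) (SOME y. mv (G i) y)"
  unfolding support_def by (auto intro: someI_ex)

lemma not_terminating_join_if_bad:
  fixes G :: "'i::order \<Rightarrow> 'g" and g :: "nat \<Rightarrow> 'i"
  assumes "\<And>n. g n \<in> support mv G" and "\<And>m n. m < n \<Longrightarrow> \<not> g m \<le> g n"
  shows "\<not> terminating (join_mv mv) (ordered_join G)"
proof -
  let ?y = "\<lambda>k. SOME y. mv (G k) y"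
  have "join_mv mv (play_along G ?y g n) (play_along G ?y g (Suc n))" for n
    using support_option[OF assms(1)] assms(2) by (rule join_mv_play_along)
  then show ?thesis
    unfolding terminating_def by (metis play_along_0)
qed

lemma depth_le_join_imp_bad_length_le:
  fixes G :: "'i::order \<Rightarrow> 'g" and g :: "nat \<Rightarrow> 'i"
  assumes "depth_le (join_mv mv) N (ordered_join G)"
    and "\<And>m. m < n \<Longrightarrow> g m \<in> support mv G" and "\<And>m m'. m < m' \<Longrightarrow> m' < n \<Longrightarrow> \<not> g m \<le> g m'"
  shows "n \<le> N"
proof -
  let ?y = "\<lambda>k. SOME y. mv (G k) y"
  have "join_mv mv (play_along G ?y g m) (play_along G ?y g (Suc m))" if "m < n" for m
    using support_option[OF assms(2)[OF that]] assms(3)[OF _ that] by (rule join_mv_play_along)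
  then have "(join_mv mv ^^ n) (ordered_join G) (play_along G ?y g n)"
    unfolding relpowp_fun_conv by (metis play_along_0)
  with assms(1) show ?thesis unfolding depth_le_def by blast
qed

lemma good_or_bad_subseq:
  fixes f :: "nat \<Rightarrow> 'a"
  shows "\<exists>r :: nat \<Rightarrow> nat. strict_mono r \<and> ((\<forall>m n. m < n \<longrightarrow> R (f (r m)) (f (r n))) \<or>
                                (\<forall>m n. m < n \<longrightarrow> \<not> R (f (r m)) (f (r n))))"
proof -
  define c where "c X = (if R (f (Min X)) (f (Max X)) then 0 else 1::nat)" for X
  have "\<forall>x\<in>UNIV. \<forall>y\<in>UNIV. x \<noteq> y \<longrightarrow> c {x, y} < 2"
    unfolding c_def by simp
  from Ramsey2[OF infinite_UNIV_nat this]
  obtain Y t where Y: "infinite Y" "t < 2" and col: "\<forall>x\<in>Y. \<forall>y\<in>Y. x \<noteq> y \<longrightarrow> c {x, y} = t"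
    by (elim exE conjE) (rule that)
  obtain r :: "nat \<Rightarrow> nat" where r: "strict_mono r" "\<And>n. r n \<in> Y"
    using infinite_enumerate[OF Y(1)] by blast
  have "R (f (r m)) (f (r n)) \<longleftrightarrow> t = 0" if "m < n" for m n
  proof -
    have lt: "r m < r n" using r(1) that by (rule strict_monoD)
    then have "c {r m, r n} = t" using col r(2) by simp
    moreover have "Min {r m, r n} = r m" "Max {r m, r n} = r n" using lt by auto
    ultimately show ?thesis using Y(2) unfolding c_def by (auto split: if_splits)
  qed
  then have "(\<forall>m n. m < n \<longrightarrow> R (f (r m)) (f (r n))) \<or>
      (\<forall>m n. m < n \<longrightarrow> \<not> R (f (r m)) (f (r n)))"
    by (cases "t = 0") auto
  with r(1) show ?thesis by blast
qed

lemma terminating_join_imp_wpo_on: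
  fixes G :: "'i::order \<Rightarrow> 'g"
  assumes "terminating (join_mv mv) (ordered_join G)"
  shows "wpo_on (support mv G)"
  unfolding wpo_on_def
proof (intro allI impI)
  fix g :: "nat \<Rightarrow> 'i" assume g: "\<forall>n. g n \<in> support mv G"
  obtain r :: "nat \<Rightarrow> nat" where r: "strict_mono r" and
    "(\<forall>m n. m < n \<longrightarrow> g (r m) \<le> g (r n)) \<or> (\<forall>m n. m < n \<longrightarrow> \<not> g (r m) \<le> g (r n))"
    using good_or_bad_subseq[where f = g and R = "(\<le>)"] by blast
  moreover have "\<not> (\<forall>m n. m < n \<longrightarrow> \<not> g (r m) \<le> g (r n))"
  proof
    assume "\<forall>m n. m < n \<longrightarrow> \<not> g (r m) \<le> g (r n)"
    then have "\<not> terminating (join_mv mv) (ordered_join G)"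
      using g by (intro not_terminating_join_if_bad[of "g \<circ> r"]) auto
    with assms show False by contradiction
  qed
  ultimately have "\<forall>m n. m < n \<longrightarrow> g (r m) \<le> g (r n)" by blast
  then have "\<forall>m n. m \<le> n \<longrightarrow> g (r m) \<le> g (r n)"
    by (metis order.refl le_neq_implies_less)
  with r show "\<exists>h :: nat \<Rightarrow> nat. strict_mono h \<and> (\<forall>m n. m \<le> n \<longrightarrow> g (h m) \<le> g (h n))"
    by (intro exI[of _ r]) simp
qed

lemma wpo_on_infinite_imp_strict_chain:
  fixes T :: "'i::order set"
  assumes "wpo_on T" and "infinite T"
  obtains d :: "nat \<Rightarrow> 'i" where "\<And>n. d n \<in> T" and "strict_mono d"
proof -
  obtain c :: "nat \<Rightarrow> 'i" where c: "inj c" "range c \<subseteq> T"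
    using infinite_countable_subset[OF assms(2)] by blast
  then obtain h :: "nat \<Rightarrow> nat" where h: "strict_mono h" "\<And>m n. m \<le> n \<Longrightarrow> c (h m) \<le> c (h n)"
    using assms(1)[unfolded wpo_on_def, rule_format, of c] by blast
  have "strict_mono (c \<circ> h)"
  proof (rule strict_monoI)
    fix m n :: nat assume "m < n"
    then have "c (h m) \<noteq> c (h n)"
      using strict_monoD[OF h(1)] c(1) by (metis inj_eq less_irrefl)
    with h(2)[of m n] \<open>m < n\<close> show "(c \<circ> h) m < (c \<circ> h) n" by auto
  qed
  with c(2) show thesis using that[of "c \<circ> h"] by auto
qed

lemma depth_le_join_imp_finite_support:
  fixes G :: "'i::order \<Rightarrow> 'g"
  assumes "depth_le (join_mv mv) N (ordered_join G)"
  shows "finite (support mv G)"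
proof (rule ccontr)
  assume "infinite (support mv G)"
  moreover have "wpo_on (support mv G)"
    using assms by (intro terminating_join_imp_wpo_on depth_le_imp_terminating)
  ultimately obtain d :: "nat \<Rightarrow> 'i" where d: "\<And>n. d n \<in> support mv G" "strict_mono d"
    using wpo_on_infinite_imp_strict_chain by blast
  \<comment> \<open>play d N, \<dots>, d 0 from the top down\<close>
  have "\<not> d (N - m) \<le> d (N - m')" if "m < m'" "m' < Suc N" for m m'
  proof -
    have "d (N - m') < d (N - m)"
      using that by (intro strict_monoD[OF d(2)]) simp
    then show ?thesis by (meson order_le_less_trans less_irrefl)
  qed
  then have "Suc N \<le> N"
    using assms d(1) by (intro depth_le_join_imp_bad_length_le[of mv N G _ "\<lambda>m. d (N - m)"])
  then show False by simp
qed

lemma wpo_on_recurrent_value: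
  fixes g :: "nat \<Rightarrow> 'i::order"
  assumes "wpo_on T" and "\<And>n. g n \<in> T" and "\<And>a b. a < b \<Longrightarrow> \<not> g a < g b"
  shows "\<exists>i. \<exists>\<^sub>\<infinity>n. g n = i"
proof -
  obtain h :: "nat \<Rightarrow> nat" where h: "strict_mono h" "\<And>m n. m \<le> n \<Longrightarrow> g (h m) \<le> g (h n)"
    using assms(1)[unfolded wpo_on_def, rule_format, of g] assms(2) by blast
  have "g (h (Suc m)) = g (h m)" for m
    using h(2)[of m "Suc m"] assms(3)[OF strict_monoD[OF h(1)], of m "Suc m"]
    by (metis order.order_iff_strict lessI)
  then have "g (h m) = g (h 0)" for m
    by (induction m) auto
  have "\<exists>\<^sub>\<infinity>n. g n = g (h 0)"
    unfolding INFM_nat_le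
  proof
    fix m
    have "m \<le> h m" using h(1) by (rule strict_mono_imp_increasing)
    with \<open>g (h m) = g (h 0)\<close> show "\<exists>n\<ge>m. g n = g (h 0)" by blast
  qed
  then show ?thesis ..
qed

lemma join_play_None_persist:
  assumes "\<And>n. join_mv mv (P n) (P (Suc n))" and "P a j = None" and "a \<le> b"
  shows "P b j = None"
  using assms(3,2) by (induction rule: dec_induct) (auto intro: join_mv_None[OF assms(1)])

lemma not_terminating_join_component:
  assumes play: "\<And>n. join_mv mv (P n) (P (Suc n))"
    and moves: "\<exists>\<^sub>\<infinity>n. join_move_at mv i (P n) (P (Suc n))"
  shows "\<not> terminating mv (the (P 0 i))"
proof -
  have Some: "P n i \<noteq> None" for n
  proof
    assume "P n i = None"
    obtain m where "n \<le> m" "join_move_at mv i (P m) (P (Suc m))"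
      using moves unfolding INFM_nat_le by blast
    with join_play_None_persist[of mv P, OF play \<open>P n i = None\<close>] show False
      by (auto simp: join_move_at_def opt_mv_def)
  qed
  define f where "f n = the (P n i)" for n
  have "f (Suc n) = f n \<or> mv (f n) (f (Suc n))" for n
    using join_mv_component[OF play, of n i] Some[of n] Some[of "Suc n"]
    unfolding f_def by (auto simp: opt_mv_iff)
  moreover have "\<exists>\<^sub>\<infinity>n. mv (f n) (f (Suc n))"
    using moves by (rule INFM_mono) (auto simp: join_move_at_def opt_mv_iff f_def)
  ultimately have "\<not> terminating mv (f 0)"
    by (rule not_terminating_if_infinitely_many_moves)
  then show ?thesis unfolding f_def .
qed

lemma terminating_join_if_wpo_on:
  fixes G :: "'i::order \<Rightarrow> 'g"
  assumes wpo: "wpo_on (support mv G)" and components: "\<And>i. terminating mv (G i)"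
  shows "terminating (join_mv mv) (ordered_join G)"
proof (rule ccontr)
  assume "\<not> terminating (join_mv mv) (ordered_join G)"
  then obtain P where P0: "P 0 = ordered_join G" and play: "\<And>n. join_mv mv (P n) (P (Suc n))"
    unfolding terminating_def by blast
  then obtain idx where idx: "\<And>n. join_move_at mv (idx n) (P n) (P (Suc n))"
    unfolding join_mv_iff_move_at by metis
  have "idx n \<in> support mv G" for n
  proof (rule join_reachable_move_at_support[OF _ idx])
    have "(join_mv mv)\<^sup>*\<^sup>* (P 0) (P n)"
      by (rule rtranclp_chain[of 0 n _ P]) (auto intro: play)
    then show "(join_mv mv)\<^sup>*\<^sup>* (ordered_join G) (P n)" by (simp add: P0)
  qed
  \<comment> \<open>the move at idx a zeroes component idx b for good\<close>
  moreover have "\<not> idx a < idx b" if "a < b" for a b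
  proof
    assume "idx a < idx b"
    then have "P (Suc a) (idx b) = None"
      using idx[of a] unfolding join_move_at_def by blast
    then have "P b (idx b) = None"
      using join_play_None_persist[of mv P, OF play] that by (simp add: Suc_leI)
    with idx[of b] show False by (simp add: join_move_at_def opt_mv_def)
  qed
  ultimately obtain i where "\<exists>\<^sub>\<infinity>n. idx n = i"
    using wpo_on_recurrent_value[OF wpo, of idx] by blast
  then have "\<exists>\<^sub>\<infinity>n. join_move_at mv i (P n) (P (Suc n))"
    by (rule INFM_mono) (use idx in blast)
  then have "\<not> terminating mv (the (P 0 i))"
    by (rule not_terminating_join_component[of mv P, OF play])
  with components P0 show False by (simp add: ordered_join_def)
qed

lemma depth_le_join_if_finite_support:
  fixes G :: "'i::order \<Rightarrow> 'g"
  assumes fin: "finite (support mv G)" and components: "\<And>i. \<exists>N. depth_le mv N (G i)"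
  shows "\<exists>N. depth_le (join_mv mv) N (ordered_join G)"
proof -
  define \<phi> where "\<phi> F = (\<Sum>i\<in>support mv G. case F i of None \<Rightarrow> 0 | Some x \<Rightarrow> depth mv x)" for F
  have "\<phi> F' < \<phi> F" if reach: "(join_mv mv)\<^sup>*\<^sup>* (ordered_join G) F" and "join_mv mv F F'" for F F'
  proof -
    obtain i0 where move: "join_move_at mv i0 F F'"
      using \<open>join_mv mv F F'\<close> unfolding join_mv_iff_move_at ..
    then obtain x y where xy: "F i0 = Some x" "F' i0 = Some y" "mv x y"
      unfolding join_move_at_def opt_mv_iff by blast
    obtain N where "depth_le mv N (G i0)" using components by blast
    then have "depth_le mv N x"
      using join_reachable_component[OF reach xy(1)] by (rule depth_le_rtranclp)
    then have lt: "depth mv y < depth mv x" using xy(3) by (rule depth_less)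
    have "(case F' i of None \<Rightarrow> 0 | Some x \<Rightarrow> depth mv x) \<le> (case F i of None \<Rightarrow> 0 | Some x \<Rightarrow> depth mv x)"
      for i
      using move xy lt unfolding join_move_at_def by (cases "i = i0"; cases "i0 < i") auto
    moreover have "i0 \<in> support mv G"
      using reach move by (rule join_reachable_move_at_support)
    ultimately show ?thesis
      unfolding \<phi>_def using xy lt by (intro sum_strict_mono_ex1[OF fin]) (auto intro!: bexI[of _ i0])
  qed
  then have "depth_le (join_mv mv) (\<phi> (ordered_join G)) (ordered_join G)"
    by (rule depth_le_if_ranking)
  then show ?thesis ..
qed

theorem mainTheorem1:
  fixes mv :: "'g \<Rightarrow> 'g \<Rightarrow> bool" and G :: "'i::order \<Rightarrow> 'g"
  shows "(terminating (join_mv mv) (ordered_join G) \<longleftrightarrow>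
            wpo_on (support mv G) \<and> (\<forall>i. terminating mv (G i)))
       \<and> (short (join_mv mv) (ordered_join G) \<longleftrightarrow>
            finite (support mv G) \<and> (\<forall>i. short mv (G i)))"
proof
  show "terminating (join_mv mv) (ordered_join G) \<longleftrightarrow>
      wpo_on (support mv G) \<and> (\<forall>i. terminating mv (G i))"
    using terminating_join_imp_wpo_on terminating_join_imp_component terminating_join_if_wpo_on
    by blast
  show "short (join_mv mv) (ordered_join G) \<longleftrightarrow> finite (support mv G) \<and> (\<forall>i. short mv (G i))"
    unfolding short_iff_depth_le
    using depth_le_join_imp_finite_support depth_le_join_imp_component depth_le_join_if_finite_support
    by blast
qed

end
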